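(* Let $(\mathfrak{A},\mathfrak{A}_0)$ be a *-semisimple CQ*-algebra with unit $I$ as in the context, let $X\in\mathfrak{A}$, and suppose $\alpha\in\mathbb{C}$ is a generalized eigenvalue of $X$. Then $X-\alpha I$ has no generalized left inverse.
   Context: Let $\mathfrak{A}_0$ be a unital C*-algebra with C*-norm $\|\cdot\|_0$ and unit $I$, and $\|\cdot\|$ another norm on $\mathfrak{A}_0$ with $\|A\|\le\|A\|_0$, $\|AB\|\le\|A\|\,\|B\|_0$, $\|A^*\|=\|A\|$. $\mathfrak{A}$ is the $\|\cdot\|$-completion of $\mathfrak{A}_0$, with $XA,AX,X^*$ ($X\in\mathfrak{A},A\in\mathfrak{A}_0$) defined as $\|\cdot\|$-limits of $A_nA$, $AA_n$, $A_n^*$ for $A_n\in\mathfrak{A}_0$, $A_n\to X$. $\mathcal{P}_{\mathfrak{A}_0}(\mathfrak{A})$ is the set of sesquilinear forms $\varphi$ on $\mathfrak{A}\times\mathfrak{A}$ with $\varphi(X,X)\ge0$, $\varphi(XA,B)=\varphi(A,X^*B)$ for $X\in\mathfrak{A}$, $A,B\in\mathfrak{A}_0$, and $|\varphi(X,Y)|\le\gamma\|X\|\|Y\|$ for some $\gamma>0$; $\mathcal{S}_{\mathfrak{A}_0}(\mathfrak{A})$ is the subset with $\gamma\le1$. *-semisimple: for every $X\ne0$ there is $\varphi\in\mathcal{S}_{\mathfrak{A}_0}(\mathfrak{A})$ with $\varphi(X,X)>0$. $Z\in\mathfrak{A}$ has a generalized left inverse if there exists $Y\in\mathfrak{A}$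 with $\varphi(ZA,Y^*B)=\varphi(A,B)$ for all $\varphi\in\mathcal{S}_{\mathfrak{A}_0}(\mathfrak{A})$ and all $A,B\in\mathfrak{A}_0$. A complex number $\alpha$ is a generalized eigenvalue of $X$ if there exist a nonzero $\varphi\in\mathcal{P}_{\mathfrak{A}_0}(\mathfrak{A})$ and $A\in\mathfrak{A}_0$ with $\varphi(A,A)>0$ and $\varphi(XA-\alpha A,B)=0$ for all $B\in\mathfrak{A}_0$. *)

theory Defs
  imports "HOL-Analysis.Analysis"
begin

text \<open>
  A CQ*-algebra (\<AA>, \<AA>0) is modelled on a Banach space type 'a (the norm of 'a is the
  norm \<parallel>.\<parallel>, and 'a is the \<parallel>.\<parallel>-completion of the dense subset A0).
\<close>

record 'a cqa =
  A0    :: "'a set"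
  cscal :: "complex \<Rightarrow> 'a \<Rightarrow> 'a"
  mul   :: "'a \<Rightarrow> 'a \<Rightarrow> 'a"             \<comment> \<open>multiplication (meaningful when one factor is in \<AA>0)\<close>
  inv   :: "'a \<Rightarrow> 'a"                  \<comment> \<open>involution X \<mapsto> X*\<close>
  norm0 :: "'a \<Rightarrow> real"
  unit  :: "'a"

definition complex_banach_structure :: "'a::banach cqa \<Rightarrow> bool" where
  "complex_banach_structure S \<longleftrightarrow>
     (\<forall>r x. cscal S (complex_of_real r) x = r *\<^sub>R x) \<and>
     (\<forall>a x y. cscal S a (x + y) = cscal S a x + cscal S a y) \<and>
     (\<forall>a b x. cscal S (a + b) x = cscal S a x + cscal S b x) \<and>
     (\<forall>a b x. cscal S (a * b) x = cscal S a (cscal S b x)) \<and>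
     (\<forall>x. cscal S 1 x = x) \<and>
     (\<forall>a x. norm (cscal S a x) = cmod a * norm x)"

definition unital_cstar_algebra :: "'a::banach cqa \<Rightarrow> bool" where
  "unital_cstar_algebra S \<longleftrightarrow>
     0 \<in> A0 S \<and> unit S \<in> A0 S \<and>
     (\<forall>A\<in>A0 S. \<forall>B\<in>A0 S. A + B \<in> A0 S) \<and>
     (\<forall>a. \<forall>A\<in>A0 S. cscal S a A \<in> A0 S) \<and>
     (\<forall>A\<in>A0 S. \<forall>B\<in>A0 S. mul S A B \<in> A0 S) \<and>
     (\<forall>A\<in>A0 S. inv S A \<in> A0 S) \<and>
     \<comment> \<open>associative bilinear multiplication with unit\<close>
     (\<forall>A\<in>A0 S. \<forall>B\<in>A0 S. \<forall>C\<in>A0 S. mul S (mul S A B) C = mul S A (mul S B C)) \<and>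
     (\<forall>A\<in>A0 S. \<forall>B\<in>A0 S. \<forall>C\<in>A0 S. mul S (A + B) C = mul S A C + mul S B C) \<and>
     (\<forall>A\<in>A0 S. \<forall>B\<in>A0 S. \<forall>C\<in>A0 S. mul S A (B + C) = mul S A B + mul S A C) \<and>
     (\<forall>a. \<forall>A\<in>A0 S. \<forall>B\<in>A0 S. mul S (cscal S a A) B = cscal S a (mul S A B)) \<and>
     (\<forall>a. \<forall>A\<in>A0 S. \<forall>B\<in>A0 S. mul S A (cscal S a B) = cscal S a (mul S A B)) \<and>
     (\<forall>A\<in>A0 S. mul S (unit S) A = A \<and> mul S A (unit S) = A) \<and>
     \<comment> \<open>involution\<close>
     (\<forall>A\<in>A0 S. inv S (inv S A) = A) \<and>
     (\<forall>A\<in>A0 S. \<forall>B\<in>A0 S. inv S (A + B) = inv S A + inv S B) \<and>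
     (\<forall>a. \<forall>A\<in>A0 S. inv S (cscal S a A) = cscal S (cnj a) (inv S A)) \<and>
     (\<forall>A\<in>A0 S. \<forall>B\<in>A0 S. inv S (mul S A B) = mul S (inv S B) (inv S A)) \<and>
     \<comment> \<open>C*-norm, complete on A0\<close>
     (\<forall>A\<in>A0 S. norm0 S A = 0 \<longleftrightarrow> A = 0) \<and>
     (\<forall>A\<in>A0 S. 0 \<le> norm0 S A) \<and>
     (\<forall>A\<in>A0 S. \<forall>B\<in>A0 S. norm0 S (A + B) \<le> norm0 S A + norm0 S B) \<and>
     (\<forall>a. \<forall>A\<in>A0 S. norm0 S (cscal S a A) = cmod a * norm0 S A) \<and>
     (\<forall>A\<in>A0 S. \<forall>B\<in>A0 S. norm0 S (mul S A B) \<le> norm0 S A * norm0 S B) \<and>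
     (\<forall>A\<in>A0 S. norm0 S (mul S (inv S A) A) = (norm0 S A)\<^sup>2) \<and>
     (\<forall>F. (\<forall>n. F n \<in> A0 S) \<longrightarrow>
          (\<forall>e>0. \<exists>N. \<forall>m\<ge>N. \<forall>n\<ge>N. norm0 S (F m - F n) < e) \<longrightarrow>
          (\<exists>L\<in>A0 S. (\<lambda>n. norm0 S (F n - L)) \<longlonglongrightarrow> 0))"

text \<open>The CQ*-algebra conditions: \<AA> (the type 'a) is the \<parallel>.\<parallel>-completion of \<AA>0,
  with the compatibility conditions on the norms, and XA, AX, X* for X \<in> \<AA>, A \<in> \<AA>0
  defined as \<parallel>.\<parallel>-limits.\<close>
definition cq_star_algebra :: "'a::banach cqa \<Rightarrow> bool" where
  "cq_star_algebra S \<longleftrightarrow>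
     complex_banach_structure S \<and> unital_cstar_algebra S \<and>
     closure (A0 S) = UNIV \<and>
     (\<forall>A\<in>A0 S. norm A \<le> norm0 S A) \<and>
     (\<forall>A\<in>A0 S. \<forall>B\<in>A0 S. norm (mul S A B) \<le> norm A * norm0 S B) \<and>
     (\<forall>A\<in>A0 S. norm (inv S A) = norm A) \<and>
     (\<forall>X A F. A \<in> A0 S \<longrightarrow> (\<forall>n. F n \<in> A0 S) \<longrightarrow> F \<longlonglongrightarrow> X \<longrightarrow>
         (\<lambda>n. mul S (F n) A) \<longlonglongrightarrow> mul S X A \<and>
         (\<lambda>n. mul S A (F n)) \<longlonglongrightarrow> mul S A X \<and>
         (\<lambda>n. inv S (F n)) \<longlonglongrightarrow> inv S X)"

definition sesquilinear :: "'a::real_normed_vector cqa \<Rightarrow> ('a \<Rightarrow> 'a \<Rightarrow> complex) \<Rightarrow> bool" where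
  "sesquilinear S \<phi> \<longleftrightarrow>
     (\<forall>X X' Y. \<phi> (X + X') Y = \<phi> X Y + \<phi> X' Y) \<and>
     (\<forall>a X Y. \<phi> (cscal S a X) Y = a * \<phi> X Y) \<and>
     (\<forall>X Y Y'. \<phi> X (Y + Y') = \<phi> X Y + \<phi> X Y') \<and>
     (\<forall>a X Y. \<phi> X (cscal S a Y) = cnj a * \<phi> X Y)"

definition P_forms :: "'a::real_normed_vector cqa \<Rightarrow> ('a \<Rightarrow> 'a \<Rightarrow> complex) set" where
  "P_forms S = {\<phi>. sesquilinear S \<phi> \<and>
     (\<forall>X. \<phi> X X \<in> \<real> \<and> 0 \<le> Re (\<phi> X X)) \<and>
     (\<forall>X. \<forall>A\<in>A0 S. \<forall>B\<in>A0 S. \<phi> (mul S X A) B = \<phi> A (mul S (inv S X) B)) \<and>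
     (\<exists>\<gamma>>0. \<forall>X Y. cmod (\<phi> X Y) \<le> \<gamma> * norm X * norm Y)}"

text \<open>\<S>_{\<AA>0}(\<AA>): the elements of \<P>_{\<AA>0}(\<AA>) with \<gamma> \<le> 1.\<close>
definition S_forms :: "'a::real_normed_vector cqa \<Rightarrow> ('a \<Rightarrow> 'a \<Rightarrow> complex) set" where
  "S_forms S = {\<phi>. sesquilinear S \<phi> \<and>
     (\<forall>X. \<phi> X X \<in> \<real> \<and> 0 \<le> Re (\<phi> X X)) \<and>
     (\<forall>X. \<forall>A\<in>A0 S. \<forall>B\<in>A0 S. \<phi> (mul S X A) B = \<phi> A (mul S (inv S X) B)) \<and>
     (\<forall>X Y. cmod (\<phi> X Y) \<le> norm X * norm Y)}"

definition star_semisimple :: "'a::real_normed_vector cqa \<Rightarrow> bool" where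
  "star_semisimple S \<longleftrightarrow>
     (\<forall>X. X \<noteq> 0 \<longrightarrow> (\<exists>\<phi>\<in>S_forms S. \<phi> X X \<in> \<real> \<and> Re (\<phi> X X) > 0))"

definition has_gen_left_inverse :: "'a::real_normed_vector cqa \<Rightarrow> 'a \<Rightarrow> bool" where
  "has_gen_left_inverse S Z \<longleftrightarrow>
     (\<exists>Y. \<forall>\<phi>\<in>S_forms S. \<forall>A\<in>A0 S. \<forall>B\<in>A0 S.
        \<phi> (mul S Z A) (mul S (inv S Y) B) = \<phi> A B)"

definition gen_eigenvalue :: "'a::real_normed_vector cqa \<Rightarrow> 'a \<Rightarrow> complex \<Rightarrow> bool" where
  "gen_eigenvalue S X \<alpha> \<longleftrightarrow>
     (\<exists>\<phi>\<in>P_forms S. \<phi> \<noteq> (\<lambda>_ _. 0) \<and> (\<exists>A\<in>A0 S. \<phi> A A \<in> \<real> \<and> Re (\<phi> A A) > 0 \<and>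
        (\<forall>B\<in>A0 S. \<phi> (mul S X A - cscal S \<alpha> A) B = 0)))"

end

theory Submission
  imports Defs
begin

text \<open>
  Let \<open>\<phi> \<in> \<P>\<close> and \<open>A \<in> \<AA>0\<close> witness the generalized eigenvalue, and normalise \<open>\<phi>\<close>
  by its bound \<open>\<gamma>\<close> so that it lies in \<open>\<S>\<close>. The form \<open>\<phi> (XA - \<alpha>A) \<cdot>\<close> vanishes on \<open>\<AA>0\<close> and is
  bounded, hence vanishes on the dense completion \<open>\<AA>\<close>. If \<open>Y\<close> were a generalized left
  inverse of \<open>X - \<alpha>I\<close>, then \<open>\<phi>(A, A) = \<phi>((X - \<alpha>I)A, Y*A) = \<phi>(XA - \<alpha>A, Y*A) = 0\<close>,
  contradicting \<open>\<phi>(A, A) > 0\<close>.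
\<close>

lemma bounded_additive_vanishes_on_closure:
  fixes f :: "'a::real_normed_vector \<Rightarrow> 'b::real_normed_vector"
  assumes add: "\<And>x y. f (x + y) = f x + f y"
    and bound: "\<And>x. norm (f x) \<le> c * norm x"
    and zero: "\<And>x. x \<in> D \<Longrightarrow> f x = 0"
    and "x \<in> closure D"
  shows "f x = 0"
proof -
  have diff: "f x - f y = f (x - y)" for x y
    using add[of y "x - y"] by simp
  have "norm (f x - f y) \<le> max c 0 * norm (x - y)" for x y
    using bound[of "x - y"] diff[of x y] by (metis max.cobounded1 mult_right_mono norm_ge_zero order_trans)
  then have "(max c 0)-lipschitz_on UNIV f"
    by (intro lipschitz_onI) (simp_all add: dist_norm)
  then have "continuous_on (closure D) f"
    using continuous_on_subset lipschitz_on_continuous_on by blast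
  then show ?thesis
    using continuous_constant_on_closure zero \<open>x \<in> closure D\<close> by metis
qed

lemma cq_star_algebraD:
  assumes "cq_star_algebra S"
  shows "complex_banach_structure S" "unital_cstar_algebra S" "closure (A0 S) = UNIV"
  using assms unfolding cq_star_algebra_def by blast+

lemma unital_cstar_algebraD:
  assumes "unital_cstar_algebra S"
  shows A0_add: "A \<in> A0 S \<Longrightarrow> B \<in> A0 S \<Longrightarrow> A + B \<in> A0 S"
    and A0_cscal: "A \<in> A0 S \<Longrightarrow> cscal S a A \<in> A0 S"
    and unit_in_A0: "unit S \<in> A0 S"
    and mul_add_left_A0: "A \<in> A0 S \<Longrightarrow> B \<in> A0 S \<Longrightarrow> C \<in> A0 S \<Longrightarrow>
      mul S (A + B) C = mul S A C + mul S B C"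
    and mul_cscal_left_A0: "A \<in> A0 S \<Longrightarrow> B \<in> A0 S \<Longrightarrow> mul S (cscal S a A) B = cscal S a (mul S A B)"
    and mul_unit_left: "A \<in> A0 S \<Longrightarrow> mul S (unit S) A = A"
  using assms unfolding unital_cstar_algebra_def by simp_all

lemma cscal_minus_one:
  assumes "complex_banach_structure S"
  shows "cscal S (-1) x = - x"
proof -
  have "cscal S (complex_of_real (-1)) x = (-1) *\<^sub>R x"
    using assms unfolding complex_banach_structure_def by blast
  then show ?thesis
    by simp
qed

lemma A0_uminus:
  assumes "complex_banach_structure S" "unital_cstar_algebra S" "A \<in> A0 S"
  shows "- A \<in> A0 S"
  using A0_cscal[OF assms(2,3)] cscal_minus_one[OF assms(1)] by metis

lemma A0_diff:
  assumes "complex_banach_structure S" "unital_cstar_algebra S" "A \<in> A0 S" "B \<in> A0 S"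
  shows "A - B \<in> A0 S"
  using A0_add[OF assms(2,3) A0_uminus[OF assms(1,2,4)]] by simp

lemma mul_diff_left_A0:
  assumes "complex_banach_structure S" "unital_cstar_algebra S"
    and "A \<in> A0 S" "B \<in> A0 S" "C \<in> A0 S"
  shows "mul S (A - B) C = mul S A C - mul S B C"
proof -
  have "mul S (- B) C = - mul S B C"
    using mul_cscal_left_A0[OF assms(2,4,5), of "-1"] cscal_minus_one[OF assms(1)] by simp
  then show ?thesis
    using mul_add_left_A0[OF assms(2,3) A0_uminus[OF assms(1,2,4)] assms(5)] by simp
qed

lemma tendsto_mul_right:
  assumes "cq_star_algebra S" "A \<in> A0 S" "\<And>n. F n \<in> A0 S" "F \<longlonglongrightarrow> X"
  shows "(\<lambda>n. mul S (F n) A) \<longlonglongrightarrow> mul S X A"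
  using assms unfolding cq_star_algebra_def by blast

lemma mul_diff_left:
  assumes cq: "cq_star_algebra S" and A: "A \<in> A0 S"
  shows "mul S (X - X') A = mul S X A - mul S X' A"
proof -
  note S = cq_star_algebraD[OF cq]
  have "X \<in> closure (A0 S)" "X' \<in> closure (A0 S)"
    using S(3) by simp_all
  then obtain F F' where F: "\<And>n. F n \<in> A0 S" "F \<longlonglongrightarrow> X" and F': "\<And>n. F' n \<in> A0 S" "F' \<longlonglongrightarrow> X'"
    unfolding closure_sequential by blast
  have "(\<lambda>n. mul S (F n - F' n) A) \<longlonglongrightarrow> mul S (X - X') A"
    using tendsto_mul_right[OF cq A A0_diff[OF S(1,2) F(1) F'(1)] tendsto_diff[OF F(2) F'(2)]] .
  moreover have "(\<lambda>n. mul S (F n - F' n) A) \<longlonglongrightarrow> mul S X A - mul S X' A"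
    using mul_diff_left_A0[OF S(1,2) F(1) F'(1) A]
      tendsto_diff[OF tendsto_mul_right[OF cq A F] tendsto_mul_right[OF cq A F']] by simp
  ultimately show ?thesis
    using LIMSEQ_unique by blast
qed

lemma mul_scaled_unit:
  assumes "unital_cstar_algebra S" "A \<in> A0 S"
  shows "mul S (cscal S a (unit S)) A = cscal S a A"
  using mul_cscal_left_A0[OF assms(1) unit_in_A0[OF assms(1)] assms(2)] mul_unit_left[OF assms] by simp

lemma P_forms_bounded:
  assumes "\<phi> \<in> P_forms S"
  obtains \<gamma> where "\<gamma> > 0" "\<And>X Y. cmod (\<phi> X Y) \<le> \<gamma> * norm X * norm Y"
  using assms unfolding P_forms_def by blast

lemma P_forms_scaled_in_S_forms:
  assumes \<phi>: "\<phi> \<in> P_forms S" and \<gamma>: "\<gamma> > 0" "\<And>X Y. cmod (\<phi> X Y) \<le> \<gamma> * norm X * norm Y"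
  shows "(\<lambda>X Y. \<phi> X Y / complex_of_real \<gamma>) \<in> S_forms S"
  unfolding S_forms_def
proof (intro CollectI conjI allI ballI)
  show "sesquilinear S (\<lambda>X Y. \<phi> X Y / complex_of_real \<gamma>)"
    using \<phi> unfolding P_forms_def sesquilinear_def by (simp add: add_divide_distrib)
  fix X Y
  show "cmod (\<phi> X Y / complex_of_real \<gamma>) \<le> norm X * norm Y"
    using \<gamma>(1) \<gamma>(2)[of X Y] by (simp add: norm_divide pos_divide_le_eq mult_ac)
  have "\<phi> X X \<in> \<real>" "0 \<le> Re (\<phi> X X)"
    using \<phi> unfolding P_forms_def by blast+
  then show "\<phi> X X / complex_of_real \<gamma> \<in> \<real>" "0 \<le> Re (\<phi> X X / complex_of_real \<gamma>)"
    using \<gamma>(1) by (simp_all add: Re_divide_of_real)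
  fix A B
  assume "A \<in> A0 S" "B \<in> A0 S"
  then show "\<phi> (mul S X A) B / complex_of_real \<gamma> = \<phi> A (mul S (inv S X) B) / complex_of_real \<gamma>"
    using \<phi> unfolding P_forms_def by simp
qed

lemma P_forms_vanishes_right:
  assumes "cq_star_algebra S" "\<phi> \<in> P_forms S" "\<And>B. B \<in> A0 S \<Longrightarrow> \<phi> Z B = 0"
  shows "\<phi> Z W = 0"
proof -
  obtain \<gamma> where \<gamma>: "\<And>Y. cmod (\<phi> Z Y) \<le> \<gamma> * norm Z * norm Y"
    using P_forms_bounded[OF assms(2)] by metis
  show ?thesis
  proof (rule bounded_additive_vanishes_on_closure[where f = "\<phi> Z"])
    show "\<phi> Z (Y + Y') = \<phi> Z Y + \<phi> Z Y'" for Y Y'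
      using assms(2) unfolding P_forms_def sesquilinear_def by blast
    show "norm (\<phi> Z Y) \<le> (\<gamma> * norm Z) * norm Y" for Y
      using \<gamma> by simp
    show "W \<in> closure (A0 S)"
      using cq_star_algebraD(3)[OF assms(1)] by simp
  qed (use assms(3) in simp)
qed

theorem proposition4p12:
  fixes S :: "'a::banach cqa" and X :: 'a and \<alpha> :: complex
  assumes "cq_star_algebra S"
    and "star_semisimple S"
    and "gen_eigenvalue S X \<alpha>"
  shows "\<not> has_gen_left_inverse S (X - cscal S \<alpha> (unit S))"
proof
  assume "has_gen_left_inverse S (X - cscal S \<alpha> (unit S))"
  then obtain Y where Y: "\<And>\<psi> A B. \<psi> \<in> S_forms S \<Longrightarrow> A \<in> A0 S \<Longrightarrow> B \<in> A0 S \<Longrightarrow>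
      \<psi> (mul S (X - cscal S \<alpha> (unit S)) A) (mul S (inv S Y) B) = \<psi> A B"
    unfolding has_gen_left_inverse_def by blast
  obtain \<phi> A where \<phi>: "\<phi> \<in> P_forms S" and A: "A \<in> A0 S" and pos: "Re (\<phi> A A) > 0"
    and eigen: "\<And>B. B \<in> A0 S \<Longrightarrow> \<phi> (mul S X A - cscal S \<alpha> A) B = 0"
    using assms(3) unfolding gen_eigenvalue_def by blast
  obtain \<gamma> where \<gamma>: "\<gamma> > 0" "\<And>X Y. cmod (\<phi> X Y) \<le> \<gamma> * norm X * norm Y"
    using P_forms_bounded[OF \<phi>] by blast
  note unital = cq_star_algebraD(2)[OF assms(1)]
  have "\<phi> A A / complex_of_real \<gamma> =
      \<phi> (mul S (X - cscal S \<alpha> (unit S)) A) (mul S (inv S Y) A) / complex_of_real \<gamma>"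
    by (rule Y[OF P_forms_scaled_in_S_forms[OF \<phi> \<gamma>] A A, symmetric])
  also have "\<dots> = \<phi> (mul S X A - cscal S \<alpha> A) (mul S (inv S Y) A) / complex_of_real \<gamma>"
    using mul_diff_left[OF assms(1) A] mul_scaled_unit[OF unital A] by simp
  also have "\<dots> = 0"
    using P_forms_vanishes_right[OF assms(1) \<phi> eigen] by simp
  finally show False
    using pos \<gamma>(1) by simp
qed

end
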